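(* Let $p,q,K$ be complex numbers with $p\neq0$ and $K(1+q/p)\neq1$, and set $K'=K\big(K(1+q/p)-1\big)^{-1}$. For any complex $L$ let $$\hat R(L;p,q)=\begin{pmatrix}1&0&0&0\\0&1-L&L/p&0\\0&Lq&1-Lq/p&0\\0&0&0&1\end{pmatrix},\qquad R(L;p,q)=P\hat R(L;p,q).$$ Then $R(K';p,q)$ is invertible and $$P\,R(K;p,q)\,P=\big(R(K';p,q)\big)^{-1}.$$ In particular, for $K=2p(p+q)^{-1}$ (assuming $p+q\neq0$) one has $K'=K$ and $\hat R(K;p,q)^2=I_4$.
   Context: Matrices are written in the ordered basis $e_1\otimes e_1,e_1\otimes e_2,e_2\otimes e_1,e_2\otimes e_2$ of $\mathbb{C}^2\otimes\mathbb{C}^2$; $P$ is the flip matrix, i.e. the $4\times4$ permutation matrix swapping the second and third basis vectors. The matrix $PRP$ is what the paper denotes $(21)R$. *)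

theory Defs
  imports "HOL-Analysis.Analysis"
begin

text \<open>4x4 complex matrices in the ordered basis e1e1, e1e2, e2e1, e2e2.\<close>

definition flipP :: "complex^4^4" where
  "flipP = vector [vector [1,0,0,0], vector [0,0,1,0], vector [0,1,0,0], vector [0,0,0,1]]"

definition Rhat :: "complex \<Rightarrow> complex \<Rightarrow> complex \<Rightarrow> complex^4^4" where
  "Rhat L p q = vector [vector [1, 0, 0, 0],
                        vector [0, 1 - L, L / p, 0],
                        vector [0, L * q, 1 - L * q / p, 0],
                        vector [0, 0, 0, 1]]"

definition Rmat :: "complex \<Rightarrow> complex \<Rightarrow> complex \<Rightarrow> complex^4^4" where
  "Rmat L p q = flipP ** Rhat L p q"

definition Kprime :: "complex \<Rightarrow> complex \<Rightarrow> complex \<Rightarrow> complex" where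
  "Kprime K p q = K * inverse (K * (1 + q / p) - 1)"

end

theory Submission
  imports Defs
begin

text \<open>Write \<open>Rhat L p q = I - L N\<close>, where \<open>N\<close> acts on the middle block as
  \<open>[[1, -1/p], [-q, q/p]]\<close>. Since \<open>N\<^sup>2 = (1 + q/p) N\<close>, these matrices form a one-parameter
  family closed under multiplication: \<open>Rhat L ** Rhat M = Rhat (L + M - L M (1 + q/p))\<close>.
  The parameter \<open>K'\<close> is exactly the inverse of \<open>K\<close> for this composition law. Since \<open>P\<close> is
  an involution, \<open>P R(K) P = Rhat K P\<close>, which is then the inverse of \<open>R(K') = P Rhat K'\<close>.
  For \<open>K = 2p/(p+q)\<close> one has \<open>K (1 + q/p) = 2\<close>, whence \<open>K' = K\<close>.\<close>

lemma vector_4 [simp]: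
  "(vector [x, y, z, w] :: 'a::zero^4) $ 1 = x"
  "(vector [x, y, z, w] :: 'a::zero^4) $ 2 = y"
  "(vector [x, y, z, w] :: 'a::zero^4) $ 3 = z"
  "(vector [x, y, z, w] :: 'a::zero^4) $ 4 = w"
  unfolding vector_def by simp_all

lemma matrix_inv_eq_right_inverse:
  fixes A B :: "'a::field^'n^'n"
  assumes AB: "A ** B = mat 1"
  shows "invertible A" and "matrix_inv A = B"
proof -
  have BA: "B ** A = mat 1"
    using AB matrix_left_right_inverse by blast
  then show "invertible A"
    using AB invertible_def by blast
  have "A ** matrix_inv A = mat 1 \<and> matrix_inv A ** A = mat 1"
    unfolding matrix_inv_def by (rule someI[of _ B]) (use AB BA in blast)
  then have "matrix_inv A ** A = mat 1"
    by blast
  have "matrix_inv A = matrix_inv A ** (A ** B)"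
    by (simp add: AB matrix_mul_rid)
  also have "\<dots> = (matrix_inv A ** A) ** B"
    by (rule matrix_mul_assoc)
  also have "\<dots> = B"
    by (simp add: \<open>matrix_inv A ** A = mat 1\<close> matrix_mul_lid)
  finally show "matrix_inv A = B" .
qed

lemma flipP_mult_flipP: "flipP ** flipP = mat 1"
  by (simp add: flipP_def matrix_matrix_mult_def vec_eq_iff forall_4 sum_4 mat_def)

lemma flipP_mult_flipP_mult [simp]: "flipP ** (flipP ** A) = A"
  by (simp add: matrix_mul_assoc flipP_mult_flipP matrix_mul_lid)

lemma flipP_Rmat_flipP: "flipP ** Rmat K p q ** flipP = Rhat K p q ** flipP"
  by (simp add: Rmat_def flip: matrix_mul_assoc)

lemma Rhat_0: "Rhat 0 p q = mat 1"
  by (simp add: Rhat_def vec_eq_iff forall_4 mat_def)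

text \<open>No hypothesis \<open>p \<noteq> 0\<close> is needed: with \<open>x / 0 = 0\<close> the law also holds for \<open>p = 0\<close>,
  so \<open>p \<noteq> 0\<close> is used only in the special case \<open>K = 2p/(p+q)\<close>.\<close>

lemma Rhat_mult: "Rhat L p q ** Rhat M p q = Rhat (L + M - L * M * (1 + q / p)) p q"
proof (cases "p = 0")
  case True
  then show ?thesis
    by (simp add: Rhat_def matrix_matrix_mult_def vec_eq_iff forall_4 sum_4 algebra_simps)
next
  case False
  then show ?thesis
    by (simp add: Rhat_def matrix_matrix_mult_def vec_eq_iff forall_4 sum_4 field_simps)
qed

lemma Rhat_Kprime_mult_Rhat:
  assumes "K * (1 + q / p) \<noteq> 1"
  shows "Rhat (Kprime K p q) p q ** Rhat K p q = mat 1"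
proof -
  have "Kprime K p q * (1 - K * (1 + q / p)) = - K"
    using assms by (simp add: Kprime_def field_simps)
  then have "Kprime K p q + K - Kprime K p q * K * (1 + q / p) = 0"
    by (simp add: algebra_simps)
  then show ?thesis
    by (simp add: Rhat_mult Rhat_0)
qed

lemma Rmat_Kprime_mult_flipP_Rmat_flipP:
  assumes "K * (1 + q / p) \<noteq> 1"
  shows "Rmat (Kprime K p q) p q ** (flipP ** Rmat K p q ** flipP) = mat 1"
proof -
  have "Rmat (Kprime K p q) p q ** (flipP ** Rmat K p q ** flipP)
      = flipP ** (Rhat (Kprime K p q) p q ** Rhat K p q) ** flipP"
    by (simp add: Rmat_def flipP_Rmat_flipP flip: matrix_mul_assoc)
  also have "\<dots> = mat 1"
    by (simp add: Rhat_Kprime_mult_Rhat[OF assms] matrix_mul_rid flipP_mult_flipP)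
  finally show ?thesis .
qed

theorem mainTheorem9:
  fixes p q K :: complex
  assumes "p \<noteq> 0" and "K * (1 + q / p) \<noteq> 1"
  shows "invertible (Rmat (Kprime K p q) p q)
       \<and> flipP ** Rmat K p q ** flipP = matrix_inv (Rmat (Kprime K p q) p q)
       \<and> (p + q \<noteq> 0 \<and> K = 2 * p * inverse (p + q) \<longrightarrow>
            Kprime K p q = K \<and> Rhat K p q ** Rhat K p q = mat 1)"
proof (intro conjI impI)
  note Rmat_right_inverse = Rmat_Kprime_mult_flipP_Rmat_flipP[OF assms(2)]
  show "invertible (Rmat (Kprime K p q) p q)"
    by (rule matrix_inv_eq_right_inverse(1)[OF Rmat_right_inverse])
  show "flipP ** Rmat K p q ** flipP = matrix_inv (Rmat (Kprime K p q) p q)"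
    by (rule matrix_inv_eq_right_inverse(2)[OF Rmat_right_inverse, symmetric])
  assume "p + q \<noteq> 0 \<and> K = 2 * p * inverse (p + q)"
  then have "K * (1 + q / p) = 2"
    using assms(1) by (elim conjE) (simp add: field_simps)
  then show Kprime_eq: "Kprime K p q = K"
    by (simp add: Kprime_def)
  show "Rhat K p q ** Rhat K p q = mat 1"
    using Rhat_Kprime_mult_Rhat[OF assms(2)] by (simp add: Kprime_eq)
qed

end
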